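(* For integers $0 \le j \le i$ let $P(i,j) = \frac{i!}{(i-j)!}$, and for an integer $i \geq 0$ let $F(i) = \sum_{j=0}^{i} P(i,j)$. For integers $N \geq 1$ and $1 \leq n \leq N$ define \[ P_{RPS}(n \mid N) = \frac{P(N,n)\,\bigl(F(n)-1\bigr)}{\sum_{i=1}^{N} P(N,i)\,\bigl(F(i)-1\bigr)} . \] Then \[ \lim_{N \to \infty} P_{RPS}(N \mid N) = 1 . \]
   Context: $P_{RPS}(\cdot \mid N)$ is called the RPST distribution: a probability distribution on $\{1, \dots, N\}$, where $P(N,n)$ is the number of ordered selections (permutation sequences) of length $n$ from $N$ elements, and $F(i)$ is the number of permutation events, including the empty one, on a set of $i$ elements. *)

theory Defs
  imports Complex_Main
begin

definition perm_count :: "nat \<Rightarrow> nat \<Rightarrow> nat" where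
  "perm_count i j = fact i div fact (i - j)"

definition F_count :: "nat \<Rightarrow> nat" where
  "F_count i = (\<Sum>j = 0..i. perm_count i j)"

definition P_RPS :: "nat \<Rightarrow> nat \<Rightarrow> real" where
  "P_RPS n N = real (perm_count N n) * (real (F_count n) - 1) /
      (\<Sum>i = 1..N. real (perm_count N i) * (real (F_count i) - 1))"

end

theory Submission
  imports Defs
begin

text \<open>
  Since \<open>F(i) = \<Sum>\<^sub>k i!/k!\<close> lies between \<open>i! + 1\<close> (for \<open>i \<ge> 1\<close>) and \<open>e i!\<close>, the weight
  \<open>P(N,i) (F(i) - 1)\<close> of \<open>i < N\<close> is at most \<open>3 N! i!\<close>, while the weight of \<open>N\<close> is at
  least \<open>N!\<^sup>2\<close>. As the factorials below \<open>N\<close> sum to at most \<open>2 (N-1)!\<close>, all weights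
  below \<open>N\<close> together are at most \<open>6/N\<close> times the weight of \<open>N\<close>.
\<close>

lemma perm_count_0 [simp]: "perm_count i 0 = 1"
  unfolding perm_count_def by simp

lemma perm_count_self [simp]: "perm_count i i = fact i"
  unfolding perm_count_def by simp

lemma perm_count_le_fact: "perm_count N i \<le> fact N"
  unfolding perm_count_def by (simp add: div_le_dividend)

lemma perm_count_Suc_Suc: "k \<le> i \<Longrightarrow> perm_count (Suc i) (Suc k) = Suc i * perm_count i k"
  unfolding perm_count_def by (simp add: div_mult_swap fact_dvd)

lemma F_count_0 [simp]: "F_count 0 = 1"
  unfolding F_count_def by simp

lemma F_count_Suc: "F_count (Suc i) = Suc i * F_count i + 1"
proof -
  have "F_count (Suc i) = perm_count (Suc i) 0 + (\<Sum>j = 0..i. perm_count (Suc i) (Suc j))"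
    unfolding F_count_def by (simp only: sum.atLeast0_atMost_Suc_shift o_def)
  also have "(\<Sum>j = 0..i. perm_count (Suc i) (Suc j)) = (\<Sum>j = 0..i. Suc i * perm_count i j)"
    by (rule sum.cong) (auto simp: perm_count_Suc_Suc)
  also have "\<dots> = Suc i * F_count i"
    unfolding F_count_def by (simp add: sum_distrib_left)
  finally show ?thesis by simp
qed

lemma fact_le_F_count: "fact i \<le> F_count i"
proof -
  have "perm_count i i \<le> F_count i"
    unfolding F_count_def by (rule member_le_sum) auto
  then show ?thesis by simp
qed

lemma F_count_pos: "0 < F_count i"
  using fact_le_F_count[of i] fact_gt_zero[of i, where 'a = nat] by linarith

lemma fact_Suc_less_F_count: "fact (Suc n) < F_count (Suc n)"
  using mult_le_mono2[OF fact_le_F_count, of "Suc n" n] by (simp add: F_count_Suc)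

lemma F_count_less_3_fact: "F_count i < 3 * fact i"
proof (induction i)
  case 0
  then show ?case by simp
next
  case (Suc n)
  show ?case
  proof (cases "n = 0")
    case True
    then show ?thesis by (simp add: F_count_Suc)
  next
    case False
    have "Suc n * (F_count n + 1) \<le> Suc n * (3 * fact n)"
      using Suc.IH by (intro mult_le_mono2) simp
    then show ?thesis
      using False by (simp add: F_count_Suc algebra_simps)
  qed
qed

lemma sum_lessThan_fact_le: "(\<Sum>i<n. fact i) \<le> (fact n :: nat)"
proof (induction n)
  case 0
  then show ?case by simp
next
  case (Suc n)
  show ?case
  proof (cases "n = 0")
    case True
    then show ?thesis by simp
  next
    case False
    have "(\<Sum>i<Suc n. fact i) \<le> 2 * (fact n :: nat)"
      using Suc.IH by simp
    also have "\<dots> \<le> Suc n * fact n"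
      using False by (intro mult_le_mono1) simp
    finally show ?thesis by simp
  qed
qed

lemma sum_atMost_fact_le: "(\<Sum>i\<le>n. fact i) \<le> 2 * (fact n :: nat)"
  using sum_lessThan_fact_le[of n] by (simp add: lessThan_Suc_atMost[symmetric])

definition rps_weight :: "nat \<Rightarrow> nat \<Rightarrow> real" where
  "rps_weight N i = real (perm_count N i) * (real (F_count i) - 1)"

lemma P_RPS_eq: "P_RPS n N = rps_weight N n / (\<Sum>i = 1..N. rps_weight N i)"
  unfolding P_RPS_def rps_weight_def ..

lemma rps_weight_nonneg: "0 \<le> rps_weight N i"
  using F_count_pos[of i] unfolding rps_weight_def by simp

lemma rps_weight_le: "rps_weight N i \<le> 3 * fact N * fact i"
proof -
  have "real (perm_count N i) \<le> fact N"
    using of_nat_mono[OF perm_count_le_fact[of N i], where 'a = real] by simp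
  moreover have "real (F_count i) - 1 \<le> 3 * fact i"
    using of_nat_mono[OF less_imp_le[OF F_count_less_3_fact[of i]], where 'a = real] by simp
  moreover have "0 \<le> real (F_count i) - 1"
    using F_count_pos[of i] by simp
  ultimately have "rps_weight N i \<le> fact N * (3 * fact i)"
    unfolding rps_weight_def by (intro mult_mono) auto
  then show ?thesis
    by (simp add: mult_ac)
qed

lemma fact_sq_le_rps_weight_self: "0 < N \<Longrightarrow> fact N * fact N \<le> rps_weight N N"
proof -
  assume "0 < N"
  then have "fact N < F_count N"
    using fact_Suc_less_F_count[of "N - 1"] by simp
  then have "fact N \<le> real (F_count N) - 1"
    using of_nat_mono[of "fact N + 1" "F_count N", where 'a = real] by simp
  then show ?thesis
    unfolding rps_weight_def by simp
qed

lemma sum_rps_weight_below_le: "(\<Sum>i = 1..m. rps_weight (Suc m) i) \<le> 6 * fact (Suc m) * fact m"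
proof -
  have "(\<Sum>i = 1..m. rps_weight (Suc m) i) \<le> (\<Sum>i = 1..m. 3 * fact (Suc m) * fact i)"
    by (intro sum_mono rps_weight_le)
  also have "\<dots> \<le> (\<Sum>i\<le>m. 3 * fact (Suc m) * fact i)"
    by (intro sum_mono2) auto
  also have "\<dots> = 3 * fact (Suc m) * (\<Sum>i\<le>m. fact i)"
    by (simp add: sum_distrib_left)
  also have "\<dots> \<le> 3 * fact (Suc m) * (2 * fact m)"
  proof -
    have "(\<Sum>i\<le>m. fact i :: real) \<le> 2 * fact m"
      using of_nat_mono[OF sum_atMost_fact_le[of m], where 'a = real] by simp
    then show ?thesis by (intro mult_left_mono) auto
  qed
  finally show ?thesis by simp
qed

lemma abs_divide_add_minus_1_le:
  fixes a r :: real
  assumes "0 < a" and "0 \<le> r"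
  shows "\<bar>a / (a + r) - 1\<bar> \<le> r / a"
proof -
  have "\<bar>a / (a + r) - 1\<bar> = r / (a + r)"
    using assms by (simp add: field_simps)
  also have "\<dots> \<le> r / a"
    using assms by (intro divide_left_mono) auto
  finally show ?thesis .
qed

lemma abs_P_RPS_self_minus_1_le: "0 < N \<Longrightarrow> \<bar>P_RPS N N - 1\<bar> \<le> 6 / real N"
proof -
  assume "0 < N"
  then obtain m where N: "N = Suc m"
    using gr0_implies_Suc by blast
  let ?a = "rps_weight N N" and ?r = "\<Sum>i = 1..m. rps_weight N i"
  have a_ge: "fact N * fact N \<le> ?a"
    using fact_sq_le_rps_weight_self[OF \<open>0 < N\<close>] .
  have a_pos: "0 < ?a"
    using a_ge by (rule order_less_le_trans[rotated]) simp
  have total: "(\<Sum>i = 1..N. rps_weight N i) = ?a + ?r"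
    using N by (simp add: sum.cl_ivl_Suc)
  have "\<bar>P_RPS N N - 1\<bar> \<le> ?r / ?a"
    unfolding P_RPS_eq total
    by (rule abs_divide_add_minus_1_le[OF a_pos sum_nonneg]) (rule rps_weight_nonneg)
  also have "\<dots> \<le> 6 * fact N * fact m / (fact N * fact N)"
    using N sum_rps_weight_below_le[of m] a_ge by (intro frac_le) auto
  also have "\<dots> = 6 * fact m / fact N"
    by simp
  also have "\<dots> = 6 / real N"
    using N by simp
  finally show ?thesis .
qed

theorem mainTheorem2:
  shows "(\<lambda>N. P_RPS N N) \<longlonglongrightarrow> 1"
proof -
  have "(\<lambda>N. 6 * (1 / real N)) \<longlonglongrightarrow> 0"
    using tendsto_mult_right_zero[OF lim_inverse_n'] .
  moreover have "\<forall>\<^sub>F N in sequentially. norm (P_RPS N N - 1) \<le> norm (6 * (1 / real N)) * 1"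
    using eventually_gt_at_top[of 0]
    by eventually_elim (simp add: abs_P_RPS_self_minus_1_le)
  ultimately have "(\<lambda>N. P_RPS N N - 1) \<longlonglongrightarrow> 0"
    by (rule tendsto_0_le)
  then show ?thesis
    by (simp add: LIM_zero_iff)
qed

end
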